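(* Let ${}^{n}\mathbf C$, ${}^{n+1}\mathbf C$ and ${}^{n}\mathbf C_{\mathrm i}$ be symmetric positive definite $3\times3$ real matrices. The matrix $\mathbf M:=\overline{({}^{n+1}\mathbf C)^{-1}\,{}^{n}\mathbf C}$ has positive real eigenvalues and is diagonalizable, so its principal square root $\mathbf F_{\mathrm{sh}}:=\mathbf M^{1/2}$ is well defined; put $${}^{\mathrm{est}}\mathbf C_{\mathrm i}:=\mathbf F_{\mathrm{sh}}^{-T}\,{}^{n}\mathbf C_{\mathrm i}\,\mathbf F_{\mathrm{sh}}^{-1}.$$ Then: (i) $\mathbf F_{\mathrm{sh}}^{-T}\,\overline{{}^{n}\mathbf C}\,\mathbf F_{\mathrm{sh}}^{-1}=\overline{{}^{n+1}\mathbf C}$, $\det\mathbf F_{\mathrm{sh}}=1$, and ${}^{\mathrm{est}}\mathbf C_{\mathrm i}$ is symmetric positive definite with $\det{}^{\mathrm{est}}\mathbf C_{\mathrm i}=\det{}^{n}\mathbf C_{\mathrm i}$; moreover ${}^{\mathrm{est}}\mathbf C_{\mathrm i}=(\overline{{}^{n+1}\mathbf C\,({}^{n}\mathbf C)^{-1}})^{1/2}\,{}^{n}\mathbf C_{\mathrm i}\,(\overline{({}^{n}\mathbf C)^{-1}\,{}^{n+1}\mathbf C})^{1/2}$. (ii) (Weak invariance) For every real $3\times3$ matrix $\mathbf F_0$ with $\det\mathbf F_0=1$, if ${}^{n}\mathbf C$, ${}^{n+1}\mathbf C$, ${}^{n}\mathbf C_{\mathrm i}$ are replaced by $\mathbf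 F_0^{-T}\,{}^{n}\mathbf C\,\mathbf F_0^{-1}$, $\mathbf F_0^{-T}\,{}^{n+1}\mathbf C\,\mathbf F_0^{-1}$, $\mathbf F_0^{-T}\,{}^{n}\mathbf C_{\mathrm i}\,\mathbf F_0^{-1}$, then the resulting estimate equals $\mathbf F_0^{-T}\,{}^{\mathrm{est}}\mathbf C_{\mathrm i}\,\mathbf F_0^{-1}$.
   Context: For a matrix $\mathbf M$ with $\det\mathbf M>0$, $\overline{\mathbf M}:=(\det\mathbf M)^{-1/3}\mathbf M$. The principal square root of a diagonalizable matrix with positive eigenvalues is the unique square root with positive eigenvalues. $\mathbf M^{-T}=(\mathbf M^{-1})^T$. *)

theory Defs
  imports "HOL-Analysis.Analysis"
begin

type_synonym mat3 = "real^3^3"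

definition is_eigenvalue :: "real^'n^'n \<Rightarrow> real \<Rightarrow> bool" where
  "is_eigenvalue A l \<longleftrightarrow> (\<exists>v. v \<noteq> 0 \<and> A *v v = l *\<^sub>R v)"

definition diagonal_mat :: "real^'n^'n \<Rightarrow> bool" where
  "diagonal_mat D \<longleftrightarrow> (\<forall>i j. i \<noteq> j \<longrightarrow> D $ i $ j = 0)"

definition real_diagonalizable :: "real^'n^'n \<Rightarrow> bool" where
  "real_diagonalizable A \<longleftrightarrow>
     (\<exists>(P::real^'n^'n) D. invertible P \<and> diagonal_mat D \<and> A = P ** D ** matrix_inv P)"

definition sym_posdef :: "real^'n^'n \<Rightarrow> bool" where
  "sym_posdef A \<longleftrightarrow> transpose A = A \<and> (\<forall>x. x \<noteq> 0 \<longrightarrow> x \<bullet> (A *v x) > 0)"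

text \<open>Unimodular part: \<open>(det M)^(-1/3) M\<close> (meant for \<open>det M > 0\<close>).\<close>
definition unimod :: "mat3 \<Rightarrow> mat3" where
  "unimod M = (det M) powr (-1/3) *\<^sub>R M"

text \<open>Principal square root: the unique square root all of whose eigenvalues
  are positive. (A real square root of a matrix with positive eigenvalues
  cannot have non-real eigenvalues, so restricting to real eigenvalues is harmless.)\<close>
definition psqrt :: "real^'n^'n \<Rightarrow> real^'n^'n" where
  "psqrt M = (THE S. S ** S = M \<and> (\<forall>l. is_eigenvalue S l \<longrightarrow> l > 0))"

definition est :: "mat3 \<Rightarrow> mat3 \<Rightarrow> mat3 \<Rightarrow> mat3" where
  "est C0 C1 Ci =
     (let F = psqrt (unimod (matrix_inv C1 ** C0))
      in transpose (matrix_inv F) ** Ci ** matrix_inv F)"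

end

theory Submission
  imports Defs
begin

text \<open>Two symmetric positive definite matrices \<open>C\<^sub>0\<close>, \<open>C\<^sub>1\<close> can be diagonalized
  simultaneously by congruence: there is an invertible \<open>T\<close> with \<open>T\<^sup>T C\<^sub>1 T = I\<close> and
  \<open>T\<^sup>T C\<^sub>0 T = diag \<lambda>\<close>, \<open>\<lambda> > 0\<close>. Then \<open>C\<^sub>1\<^sup>-\<^sup>1 C\<^sub>0 = T diag \<lambda> T\<^sup>-\<^sup>1\<close>, and every matrix
  in the statement (its unimodular part \<open>M\<close>, the principal root \<open>F\<^sub>s\<^sub>h\<close>, the reversed
  quotients and their roots) has the form \<open>T diag \<nu> T\<^sup>-\<^sup>1\<close> for an explicit positive \<open>\<nu>\<close>,
  so every claim becomes an identity between diagonal matrices. Replacing the \<open>C\<close>'s by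
  their congruences with \<open>F\<^sub>0\<^sup>-\<^sup>1\<close> replaces \<open>T\<close> by \<open>F\<^sub>0 T\<close> and keeps \<open>\<lambda>\<close>, which is the
  weak invariance (for every invertible \<open>F\<^sub>0\<close>). Simultaneous diagonalization rests on the
  spectral theorem, obtained by maximizing the Rayleigh quotient on invariant subspaces.\<close>

section \<open>Spectral theorem for symmetric matrices\<close>

lemma linear_coeff_zero_if_quadratic_nonpos:
  fixes a b :: real
  assumes "\<And>t. a * t^2 + b * t \<le> 0"
  shows "b = 0"
proof (rule ccontr)
  assume b: "b \<noteq> 0"
  define c where "c = 2 * \<bar>a\<bar> + 2"
  have c: "c > 0" and ac: "a + c > 0"
    unfolding c_def using abs_ge_zero[of a] abs_ge_minus_self[of a] by linarith+
  have "a * (b/c)^2 + b * (b/c) = b^2 * (a + c) / (c*c)"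
    using c by (simp add: power2_eq_square divide_simps) (simp add: algebra_simps)
  moreover have "b^2 * (a + c) / (c*c) > 0"
    using b c ac by (intro divide_pos_pos mult_pos_pos) auto
  ultimately show False using assms[of "b/c"] by linarith
qed

lemma symmetric_matrix_inner:
  fixes A :: "real^'n^'n"
  assumes "transpose A = A"
  shows "(A *v x) \<bullet> y = x \<bullet> (A *v y)"
  by (metis assms dot_lmul_matrix transpose_matrix_vector)

text \<open>First-order condition at a maximizer \<open>v\<close> of the Rayleigh quotient: moving to
  \<open>v + t y\<close> with \<open>y \<perp> v\<close> must not increase it, so the linear term \<open>2 t (A v) \<bullet> y\<close> vanishes.\<close>
lemma rayleigh_max_orthogonal:
  fixes A :: "real^'n^'n"
  assumes sym: "transpose A = A" and S: "subspace S"
    and v: "v \<in> S" "norm v = 1"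
    and max: "\<And>w. w \<in> S \<Longrightarrow> norm w = 1 \<Longrightarrow> w \<bullet> (A *v w) \<le> v \<bullet> (A *v v)"
    and y: "y \<in> S" "v \<bullet> y = 0"
  shows "(A *v v) \<bullet> y = 0"
proof -
  define l where "l = v \<bullet> (A *v v)"
  have vv: "v \<bullet> v = 1" using v by (simp add: norm_eq_1)
  have "(y \<bullet> (A *v y) - l * (y \<bullet> y)) * t^2 + (2 * ((A *v v) \<bullet> y)) * t \<le> 0" for t
  proof -
    define w where "w = v + t *\<^sub>R y"
    have ww: "w \<bullet> w = 1 + t^2 * (y \<bullet> y)" unfolding w_def
      using vv y by (simp add: inner_add_left inner_add_right inner_commute power2_eq_square)
    hence w_pos: "w \<bullet> w > 0" using inner_ge_zero[of y] by (simp add: add_pos_nonneg)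
    hence nw: "norm w > 0" by (simp add: inner_gt_zero_iff)
    have "w /\<^sub>R norm w \<in> S" unfolding w_def using v y S by (simp add: subspace_add subspace_scale)
    hence "(w /\<^sub>R norm w) \<bullet> (A *v (w /\<^sub>R norm w)) \<le> l"
      unfolding l_def using nw by (intro max) auto
    moreover have "(w /\<^sub>R norm w) \<bullet> (A *v (w /\<^sub>R norm w)) = (w \<bullet> (A *v w)) / (w \<bullet> w)"
      using nw by (simp add: matrix_vector_mult_scaleR power2_norm_eq_inner[symmetric] power2_eq_square)
        (simp add: field_simps)
    ultimately have "w \<bullet> (A *v w) \<le> l * (w \<bullet> w)" using w_pos by (simp add: divide_le_eq)
    moreover have "w \<bullet> (A *v w) = l + 2 * t * ((A *v v) \<bullet> y) + t^2 * (y \<bullet> (A *v y))"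
      using symmetric_matrix_inner[OF sym, of v y] unfolding w_def l_def
      by (simp add: matrix_vector_right_distrib matrix_vector_mult_scaleR inner_add_left
          inner_add_right inner_commute power2_eq_square algebra_simps)
    ultimately show ?thesis using ww by (simp add: algebra_simps power2_eq_square)
  qed
  from linear_coeff_zero_if_quadratic_nonpos[OF this] show ?thesis by simp
qed

lemma symmetric_invariant_subspace_has_eigenvector:
  fixes A :: "real^'n^'n"
  assumes sym: "transpose A = A" and S: "subspace S"
    and invariant: "\<And>x. x \<in> S \<Longrightarrow> A *v x \<in> S"
    and x0: "x0 \<in> S" "x0 \<noteq> 0"
  shows "\<exists>v\<in>S. norm v = 1 \<and> A *v v = (v \<bullet> (A *v v)) *\<^sub>R v"
proof -
  define K where "K = S \<inter> sphere 0 1"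
  have "compact K" unfolding K_def
    using S closed_subspace compact_sphere closed_Int_compact by blast
  moreover have "x0 /\<^sub>R norm x0 \<in> K" unfolding K_def using x0 S by (simp add: subspace_scale)
  moreover have "continuous_on K (\<lambda>x. x \<bullet> (A *v x))"
    by (rule continuous_on_inner[OF continuous_on_id matrix_vector_mult_linear_continuous_on])
  ultimately obtain v where vK: "v \<in> K" and max: "\<forall>w\<in>K. w \<bullet> (A *v w) \<le> v \<bullet> (A *v v)"
    using continuous_attains_sup[of K "\<lambda>x. x \<bullet> (A *v x)"] by auto
  from vK have v: "v \<in> S" "norm v = 1" unfolding K_def by auto
  define z where "z = A *v v - (v \<bullet> (A *v v)) *\<^sub>R v"
  have "z \<in> S" unfolding z_def using v invariant S by (simp add: subspace_diff subspace_scale)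
  moreover have zv: "v \<bullet> z = 0"
    using v unfolding z_def by (simp add: inner_diff_right norm_eq_1)
  moreover have "\<And>w. w \<in> S \<Longrightarrow> norm w = 1 \<Longrightarrow> w \<bullet> (A *v w) \<le> v \<bullet> (A *v v)"
    using max unfolding K_def by auto
  ultimately have "(A *v v) \<bullet> z = 0" using rayleigh_max_orthogonal[OF sym S v] by blast
  hence "z \<bullet> z = 0" using zv unfolding z_def by (simp add: inner_diff_left)
  thus ?thesis using v unfolding z_def by auto
qed

lemma symmetric_orthonormal_eigenvectors:
  fixes A :: "real^'n^'n"
  assumes sym: "transpose A = A" and "k \<le> CARD('n)"
  shows "\<exists>B. finite B \<and> card B = k \<and> (\<forall>b\<in>B. \<forall>c\<in>B. b \<noteq> c \<longrightarrow> b \<bullet> c = 0)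
           \<and> (\<forall>b\<in>B. norm b = 1 \<and> A *v b = (b \<bullet> (A *v b)) *\<^sub>R b)"
  using \<open>k \<le> CARD('n)\<close>
proof (induction k)
  case 0
  show ?case by (rule exI[of _ "{}"]) simp
next
  case (Suc k)
  then obtain B where fin: "finite B" and card: "card B = k"
    and orth: "\<forall>b\<in>B. \<forall>c\<in>B. b \<noteq> c \<longrightarrow> b \<bullet> c = 0"
    and eig: "\<forall>b\<in>B. norm b = 1 \<and> A *v b = (b \<bullet> (A *v b)) *\<^sub>R b" by auto
  define S where "S = {x. \<forall>b\<in>B. b \<bullet> x = 0}"
  have S: "subspace S" unfolding subspace_def S_def by (simp add: inner_add_right)
  have invariant: "A *v x \<in> S" if "x \<in> S" for x
  proof -
    have "b \<bullet> (A *v x) = (b \<bullet> (A *v b)) * (b \<bullet> x)" if "b \<in> B" for b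
      using symmetric_matrix_inner[OF sym, of b x] eig that by (metis inner_scaleR_left)
    thus ?thesis using \<open>x \<in> S\<close> unfolding S_def by simp
  qed
  have "dim B < DIM(real^'n)" using fin card Suc.prems dim_le_card'[of B] by simp
  then obtain a :: "real^'n" where a: "a \<noteq> 0" and "span B \<subseteq> {x. a \<bullet> x = 0}"
    using lowdim_subset_hyperplane by blast
  hence "a \<in> S" unfolding S_def using span_base by (fastforce simp: inner_commute)
  then obtain v where vS: "v \<in> S" and v: "norm v = 1" "A *v v = (v \<bullet> (A *v v)) *\<^sub>R v"
    using symmetric_invariant_subspace_has_eigenvector[OF sym S invariant _ a] by blast
  have "v \<notin> B"
  proof
    assume "v \<in> B"
    hence "v \<bullet> v = 0" using vS unfolding S_def by simp
    thus False using v by simp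
  qed
  show ?case
  proof (intro exI[of _ "insert v B"] conjI)
    show "finite (insert v B)" "card (insert v B) = Suc k" using fin card \<open>v \<notin> B\<close> by simp_all
    show "\<forall>b\<in>insert v B. \<forall>c\<in>insert v B. b \<noteq> c \<longrightarrow> b \<bullet> c = 0"
      using orth vS unfolding S_def by (auto simp: inner_commute)
    show "\<forall>b\<in>insert v B. norm b = 1 \<and> A *v b = (b \<bullet> (A *v b)) *\<^sub>R b"
      using eig v by auto
  qed
qed

definition diagm :: "('n \<Rightarrow> real) \<Rightarrow> real^'n^'n" where
  "diagm d = (\<chi> i j. if i = j then d i else 0)"

lemma symmetric_orthogonal_diagonalization:
  fixes A :: "real^'n^'n"
  assumes sym: "transpose A = A"
  obtains P d where "orthogonal_matrix P" "A = P ** diagm d ** transpose P"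
    "\<And>j. \<exists>u. norm u = 1 \<and> d j = u \<bullet> (A *v u)"
proof -
  obtain B where fin: "finite B" and card: "card B = CARD('n)"
    and orth: "\<forall>b\<in>B. \<forall>c\<in>B. b \<noteq> c \<longrightarrow> b \<bullet> c = 0"
    and eig: "\<forall>b\<in>B. norm b = 1 \<and> A *v b = (b \<bullet> (A *v b)) *\<^sub>R b"
    using symmetric_orthonormal_eigenvectors[OF sym, of "CARD('n)"] by auto
  obtain g where g: "bij_betw g (UNIV::'n set) B"
    using finite_same_card_bij[of "UNIV::'n set" B] fin card by auto
  have gB: "g j \<in> B" for j using g by (auto simp: bij_betw_def)
  have g_inj: "g i = g j \<Longrightarrow> i = j" for i j using g by (auto simp: bij_betw_def inj_on_def)
  define P :: "real^'n^'n" where "P = (\<chi> i j. g j $ i)"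
  define d where "d j = g j \<bullet> (A *v g j)" for j
  have "(transpose P ** P) $ i $ j = mat 1 $ i $ j" for i j
  proof -
    have "(transpose P ** P) $ i $ j = g i \<bullet> g j"
      by (simp add: P_def matrix_matrix_mult_def transpose_def inner_vec_def)
    also have "\<dots> = mat 1 $ i $ j"
    proof (cases "i = j")
      case True thus ?thesis using eig gB by (simp add: mat_def norm_eq_1)
    next
      case False hence "g i \<noteq> g j" using g_inj by blast
      thus ?thesis using orth gB False by (simp add: mat_def)
    qed
    finally show ?thesis .
  qed
  hence P: "orthogonal_matrix P" unfolding orthogonal_matrix by (simp add: vec_eq_iff)
  have "(A ** P) $ i $ j = (P ** diagm d) $ i $ j" for i j
  proof -
    have "(A ** P) $ i $ j = (A *v g j) $ i"
      by (simp add: P_def matrix_matrix_mult_def matrix_vector_mult_def)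
    also have "\<dots> = d j * g j $ i"
    proof -
      have "A *v g j = d j *\<^sub>R g j" using eig gB[of j] unfolding d_def by blast
      thus ?thesis by simp
    qed
    also have "\<dots> = (P ** diagm d) $ i $ j"
      by (simp add: P_def diagm_def matrix_matrix_mult_def if_distrib if_distribR cong: if_cong)
    finally show ?thesis .
  qed
  hence "A ** P = P ** diagm d" by (simp add: vec_eq_iff)
  hence "A ** (P ** transpose P) = P ** diagm d ** transpose P" by (simp add: matrix_mul_assoc)
  hence "A = P ** diagm d ** transpose P" using P by (simp add: orthogonal_matrix_def)
  moreover have "\<exists>u. norm u = 1 \<and> d j = u \<bullet> (A *v u)" for j
    using eig gB[of j] unfolding d_def by blast
  ultimately show thesis using that P by blast
qed

lemma sym_posdef_orthogonal_diagonalization: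
  fixes A :: "real^'n^'n"
  assumes "sym_posdef A"
  obtains P d where "orthogonal_matrix P" "A = P ** diagm d ** transpose P" "\<And>i. d i > 0"
proof -
  have sym: "transpose A = A" and pos: "\<And>x. x \<noteq> 0 \<Longrightarrow> x \<bullet> (A *v x) > 0"
    using assms unfolding sym_posdef_def by auto
  obtain P d where "orthogonal_matrix P" "A = P ** diagm d ** transpose P"
    and d: "\<And>j. \<exists>u. norm u = 1 \<and> d j = u \<bullet> (A *v u)"
    using symmetric_orthogonal_diagonalization[OF sym] by blast
  moreover have "d i > 0" for i
    using d[of i] pos by (metis norm_zero zero_neq_one)
  ultimately show thesis using that by blast
qed

lemma matrix_inv_right:
  fixes A :: "real^'n^'n"
  assumes "invertible A"
  shows "A ** matrix_inv A = mat 1"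
  using someI_ex[OF assms[unfolded invertible_def]] unfolding matrix_inv_def by blast

lemma matrix_inv_left:
  fixes A :: "real^'n^'n"
  assumes "invertible A"
  shows "matrix_inv A ** A = mat 1"
  using someI_ex[OF assms[unfolded invertible_def]] unfolding matrix_inv_def by blast

lemma matrix_inv_unique:
  fixes A B :: "real^'n^'n"
  assumes "A ** B = mat 1"
  shows "matrix_inv A = B"
proof -
  have "invertible A" using assms invertible_right_inverse by blast
  have "matrix_inv A = matrix_inv A ** (A ** B)" using assms by simp
  also have "\<dots> = B" using matrix_inv_left[OF \<open>invertible A\<close>] by (metis matrix_mul_assoc matrix_mul_lid)
  finally show ?thesis .
qed

lemma invertible_matrix_inv:
  fixes A :: "real^'n^'n"
  assumes "invertible A"
  shows "invertible (matrix_inv A)"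
  using matrix_inv_left[OF assms] invertible_right_inverse by blast

lemma matrix_inv_matrix_inv:
  fixes A :: "real^'n^'n"
  assumes "invertible A"
  shows "matrix_inv (matrix_inv A) = A"
  using matrix_inv_unique[OF matrix_inv_left[OF assms]] .

lemma matrix_inv_mult:
  fixes A B :: "real^'n^'n"
  assumes "invertible A" "invertible B"
  shows "matrix_inv (A ** B) = matrix_inv B ** matrix_inv A"
proof (rule matrix_inv_unique)
  have "A ** B ** (matrix_inv B ** matrix_inv A) = A ** (B ** matrix_inv B) ** matrix_inv A"
    by (simp add: matrix_mul_assoc)
  thus "A ** B ** (matrix_inv B ** matrix_inv A) = mat 1"
    using matrix_inv_right[OF assms(1)] matrix_inv_right[OF assms(2)] by simp
qed

lemma transpose_matrix_inv_left:
  fixes A :: "real^'n^'n"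
  assumes "invertible A"
  shows "transpose (matrix_inv A) ** transpose A = mat 1"
  by (metis assms matrix_inv_right matrix_transpose_mul transpose_mat)

lemma transpose_matrix_inv_right:
  fixes A :: "real^'n^'n"
  assumes "invertible A"
  shows "transpose A ** transpose (matrix_inv A) = mat 1"
  by (metis assms matrix_inv_left matrix_transpose_mul transpose_mat)

lemma matrix_inv_transpose:
  fixes A :: "real^'n^'n"
  assumes "invertible A"
  shows "matrix_inv (transpose A) = transpose (matrix_inv A)"
  using transpose_matrix_inv_right[OF assms] by (rule matrix_inv_unique)

lemma orthogonal_matrix_invertible:
  fixes P :: "real^'n^'n"
  assumes "orthogonal_matrix P"
  shows "invertible P"
  using assms invertible_right_inverse unfolding orthogonal_matrix_def by blast

lemma matrix_mul_right_inverse_cancel: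
  fixes A B X :: "real^'n^'n"
  assumes "A ** B = mat 1"
  shows "X ** A ** B = X"
  by (metis assms matrix_mul_assoc matrix_mul_rid)

lemma det_matrix_inv:
  fixes A :: "real^'n^'n"
  assumes "invertible A"
  shows "det (matrix_inv A) = 1 / det A"
proof -
  have "det A * det (matrix_inv A) = 1"
    using matrix_inv_right[OF assms] by (metis det_I det_mul)
  thus ?thesis by (metis mult_zero_left nonzero_mult_div_cancel_left zero_neq_one)
qed

section \<open>Diagonal matrices and their similarity transforms\<close>

lemma diagm_mult: "diagm a ** diagm b = diagm (\<lambda>i. a i * b i)"
proof -
  have "(diagm a ** diagm b) $ i $ j = diagm (\<lambda>i. a i * b i) $ i $ j" for i j
  proof -
    have "(diagm a ** diagm b) $ i $ j = (\<Sum>k\<in>UNIV. diagm a $ i $ k * diagm b $ k $ j)"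
      by (simp add: matrix_matrix_mult_def)
    also have "\<dots> = (\<Sum>k\<in>UNIV. if k = i then diagm (\<lambda>i. a i * b i) $ i $ j else 0)"
      by (rule sum.cong) (auto simp: diagm_def)
    finally show ?thesis by simp
  qed
  thus ?thesis by (simp add: vec_eq_iff)
qed

lemma matrix_mul_diagm_diagm: "X ** diagm a ** diagm b = X ** diagm (\<lambda>i. a i * b i)"
  by (metis diagm_mult matrix_mul_assoc)

lemma diagm_one: "diagm (\<lambda>_. 1) = mat 1"
  by (simp add: vec_eq_iff diagm_def mat_def)

lemma scaleR_diagm: "c *\<^sub>R diagm d = diagm (\<lambda>i. c * d i)"
  by (simp add: vec_eq_iff diagm_def)

lemma transpose_diagm: "transpose (diagm d) = diagm d"
  by (simp add: vec_eq_iff diagm_def transpose_def)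

lemma det_diagm: "det (diagm d :: real^'n^'n) = prod d UNIV"
  by (subst det_diagonal) (auto simp: diagm_def)

lemma diagonal_mat_diagm: "diagonal_mat (diagm d)"
  by (simp add: diagonal_mat_def diagm_def)

lemma diagm_mult_vector: "diagm d *v x = (\<chi> i. d i * x $ i)"
proof -
  have "(diagm d *v x) $ i = (\<Sum>j\<in>UNIV. if i = j then d i * x $ j else 0)" for i
    by (simp add: diagm_def matrix_vector_mult_def if_distrib if_distribR cong: if_cong)
  thus ?thesis by (simp add: vec_eq_iff)
qed

lemma diagm_axis: "diagm d *v axis j 1 = d j *\<^sub>R axis j 1"
  by (simp add: diagm_mult_vector vec_eq_iff axis_def)

lemma matrix_eq_if_axis:
  fixes A B :: "real^'n^'m"
  assumes "\<And>j. A *v axis j 1 = B *v axis j 1"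
  shows "A = B"
proof -
  have "column j A = column j B" for j using assms[of j] by (simp add: matrix_vector_mult_basis)
  thus ?thesis by (simp add: vec_eq_iff column_def)
qed

lemma diag_similar_mult:
  fixes P :: "real^'n^'n"
  assumes "invertible P"
  shows "(P ** diagm a ** matrix_inv P) ** (P ** diagm b ** matrix_inv P)
    = P ** diagm (\<lambda>i. a i * b i) ** matrix_inv P"
proof -
  have "(P ** diagm a ** matrix_inv P) ** (P ** diagm b ** matrix_inv P)
      = P ** diagm a ** (matrix_inv P ** P) ** diagm b ** matrix_inv P"
    by (simp add: matrix_mul_assoc)
  also have "\<dots> = P ** (diagm a ** diagm b) ** matrix_inv P"
    using matrix_inv_left[OF assms] by (simp add: matrix_mul_assoc)
  finally show ?thesis by (simp add: diagm_mult)
qed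

lemma diag_similar_axis:
  fixes P :: "real^'n^'n"
  assumes "invertible P"
  shows "(P ** diagm d ** matrix_inv P) *v (P *v axis j 1) = d j *\<^sub>R (P *v axis j 1)"
proof -
  have "(P ** diagm d ** matrix_inv P) *v (P *v axis j 1)
      = P *v (diagm d *v ((matrix_inv P ** P) *v axis j 1))"
    by (simp add: matrix_vector_mul_assoc matrix_mul_assoc)
  thus ?thesis using matrix_inv_left[OF assms] by (simp add: diagm_axis matrix_vector_mult_scaleR)
qed

lemma eigenvalue_diag_similar:
  fixes P :: "real^'n^'n"
  assumes "invertible P" and "is_eigenvalue (P ** diagm d ** matrix_inv P) l"
  obtains i where "l = d i"
proof -
  obtain v where "v \<noteq> 0" and Mv: "(P ** diagm d ** matrix_inv P) *v v = l *\<^sub>R v"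
    using assms(2) unfolding is_eigenvalue_def by blast
  define w where "w = matrix_inv P *v v"
  have "P *v w = v" unfolding w_def using matrix_inv_right[OF assms(1)]
    by (simp add: matrix_vector_mul_assoc)
  hence "w \<noteq> 0" using \<open>v \<noteq> 0\<close> by auto
  then obtain i where wi: "w $ i \<noteq> 0" by (auto simp: vec_eq_iff)
  have "diagm d *v w = matrix_inv P *v (P *v (diagm d *v w))"
    using matrix_inv_left[OF assms(1)] by (simp add: matrix_vector_mul_assoc[of "matrix_inv P" P])
  also have "\<dots> = matrix_inv P *v ((P ** diagm d ** matrix_inv P) *v v)"
    unfolding w_def by (simp add: matrix_vector_mul_assoc matrix_mul_assoc)
  also have "\<dots> = l *\<^sub>R w" unfolding w_def Mv by (simp add: matrix_vector_mult_scaleR)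
  finally have "d i * w $ i = l * w $ i" by (simp add: vec_eq_iff diagm_mult_vector)
  thus thesis using that[of i] wi by simp
qed

lemma diag_similar_sqrt:
  fixes P :: "real^'n^'n"
  assumes "invertible P" and pos: "\<And>i. d i > 0"
  defines "S \<equiv> P ** diagm (\<lambda>i. sqrt (d i)) ** matrix_inv P"
  shows "S ** S = P ** diagm d ** matrix_inv P" and "is_eigenvalue S l \<Longrightarrow> l > 0"
proof -
  have "(\<lambda>i. sqrt (d i) * sqrt (d i)) = d" using pos by (simp add: less_imp_le)
  thus "S ** S = P ** diagm d ** matrix_inv P"
    unfolding S_def diag_similar_mult[OF assms(1)] by simp
  show "l > 0" if "is_eigenvalue S l"
    using eigenvalue_diag_similar[OF assms(1) that[unfolded S_def]] pos by (metis real_sqrt_gt_zero)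
qed

text \<open>If \<open>P e\<^sub>j\<close> is an eigenvector of \<open>S\<^sup>2\<close> for \<open>d\<^sub>j\<close>, then \<open>w = (S - \<surd>d\<^sub>j) P e\<^sub>j\<close>
  satisfies \<open>S w = -\<surd>d\<^sub>j w\<close>; as \<open>-\<surd>d\<^sub>j\<close> is not an eigenvalue of \<open>S\<close>, \<open>w = 0\<close>.\<close>
lemma diag_similar_sqrt_unique:
  fixes P :: "real^'n^'n"
  assumes "invertible P" and pos: "\<And>i. d i > 0"
    and square: "S ** S = P ** diagm d ** matrix_inv P"
    and eig_pos: "\<And>l. is_eigenvalue S l \<Longrightarrow> l > 0"
  shows "S = P ** diagm (\<lambda>i. sqrt (d i)) ** matrix_inv P"
proof -
  have "S *v (P *v axis j 1) = sqrt (d j) *\<^sub>R (P *v axis j 1)" for j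
  proof -
    define t where "t = P *v axis j 1"
    define w where "w = S *v t - sqrt (d j) *\<^sub>R t"
    have "S *v w = (S ** S) *v t - sqrt (d j) *\<^sub>R (S *v t)"
      unfolding w_def
      by (simp add: matrix_vector_mult_diff_distrib matrix_vector_mult_scaleR matrix_vector_mul_assoc)
    also have "\<dots> = (- sqrt (d j)) *\<^sub>R w"
      using diag_similar_axis[OF assms(1), of d j] pos[of j] unfolding square w_def t_def
      by (simp add: algebra_simps)
    finally have "S *v w = (- sqrt (d j)) *\<^sub>R w" .
    moreover have "\<not> is_eigenvalue S (- sqrt (d j))"
      using eig_pos pos[of j] by (metis neg_less_0_iff_less not_less_iff_gr_or_eq real_sqrt_gt_zero)
    ultimately have "w = 0" unfolding is_eigenvalue_def by blast
    thus ?thesis unfolding w_def t_def by simp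
  qed
  hence "(S ** P) *v axis j 1 = (P ** diagm (\<lambda>i. sqrt (d i)) ** matrix_inv P ** P) *v axis j 1" for j
    using diag_similar_axis[OF assms(1), of "\<lambda>i. sqrt (d i)" j] by (metis matrix_vector_mul_assoc)
  hence "S ** P = P ** diagm (\<lambda>i. sqrt (d i)) ** matrix_inv P ** P"
    by (rule matrix_eq_if_axis)
  thus ?thesis
    using matrix_mul_right_inverse_cancel[OF matrix_inv_right[OF assms(1)]] by metis
qed

lemma psqrt_diag_similar:
  fixes P :: "real^'n^'n"
  assumes "invertible P" and "\<And>i. d i > 0"
  shows "psqrt (P ** diagm d ** matrix_inv P) = P ** diagm (\<lambda>i. sqrt (d i)) ** matrix_inv P"
  unfolding psqrt_def
proof (rule the_equality)
  show "(P ** diagm (\<lambda>i. sqrt (d i)) ** matrix_inv P) ** (P ** diagm (\<lambda>i. sqrt (d i)) ** matrix_inv P)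
      = P ** diagm d ** matrix_inv P
    \<and> (\<forall>l. is_eigenvalue (P ** diagm (\<lambda>i. sqrt (d i)) ** matrix_inv P) l \<longrightarrow> l > 0)"
    using diag_similar_sqrt[where d = d, OF assms] by blast
qed (use diag_similar_sqrt_unique[where d = d, OF assms] in blast)

lemma det_diag_similar:
  fixes P :: "real^'n^'n"
  assumes "invertible P"
  shows "det (P ** diagm d ** matrix_inv P) = prod d UNIV"
proof -
  have "det P \<noteq> 0" using assms by (simp add: invertible_det_nz)
  thus ?thesis by (simp add: det_mul det_diagm det_matrix_inv[OF assms])
qed

lemma scaleR_diag_similar:
  "c *\<^sub>R (P ** diagm d ** Q) = P ** diagm (\<lambda>i. c * d i) ** Q"
proof -
  have "c *\<^sub>R (P ** diagm d ** Q) = P ** (c *\<^sub>R diagm d) ** Q"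
    by (simp only: scalar_matrix_assoc matrix_scalar_ac)
  thus ?thesis by (simp add: scaleR_diagm)
qed

lemma diag_similar_right_inverse:
  fixes P :: "real^'n^'n"
  assumes "invertible P" and "\<And>i. d i \<noteq> 0"
  shows "(P ** diagm d ** matrix_inv P) ** (P ** diagm (\<lambda>i. 1 / d i) ** matrix_inv P) = mat 1"
  using matrix_inv_right[OF assms(1)] assms(2) by (simp add: diag_similar_mult[OF assms(1)] diagm_one)

lemma matrix_inv_diag_similar:
  fixes P :: "real^'n^'n"
  assumes "invertible P" and "\<And>i. d i \<noteq> 0"
  shows "matrix_inv (P ** diagm d ** matrix_inv P) = P ** diagm (\<lambda>i. 1 / d i) ** matrix_inv P"
  using diag_similar_right_inverse[where d = d, OF assms] by (rule matrix_inv_unique)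

lemma invertible_diag_similar:
  fixes P :: "real^'n^'n"
  assumes "invertible P" and "\<And>i. d i \<noteq> 0"
  shows "invertible (P ** diagm d ** matrix_inv P)"
  using diag_similar_right_inverse[where d = d, OF assms] invertible_right_inverse by blast

lemma transpose_diag_similar:
  fixes P :: "real^'n^'n"
  assumes "invertible P"
  shows "transpose (P ** diagm d ** matrix_inv P)
    = transpose (matrix_inv P) ** diagm d ** matrix_inv (transpose (matrix_inv P))"
proof -
  have "matrix_inv (transpose (matrix_inv P)) = transpose P"
    using matrix_inv_transpose[OF invertible_matrix_inv[OF assms]] matrix_inv_matrix_inv[OF assms]
    by simp
  thus ?thesis by (simp add: matrix_transpose_mul transpose_diagm matrix_mul_assoc)
qed

lemma real_diagonalizable_diag_similar:
  fixes P :: "real^'n^'n"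
  assumes "invertible P"
  shows "real_diagonalizable (P ** diagm d ** matrix_inv P)"
  using assms diagonal_mat_diagm unfolding real_diagonalizable_def by blast

section \<open>Simultaneous diagonalization by congruence\<close>

lemma sym_posdef_congruence:
  fixes A G :: "real^'n^'n"
  assumes "invertible G" and "sym_posdef A"
  shows "sym_posdef (transpose G ** A ** G)"
  unfolding sym_posdef_def
proof (intro conjI allI impI)
  show "transpose (transpose G ** A ** G) = transpose G ** A ** G"
    using assms(2) by (simp add: sym_posdef_def matrix_transpose_mul matrix_mul_assoc)
next
  fix x :: "real^'n" assume "x \<noteq> 0"
  hence "G *v x \<noteq> 0" using inj_matrix_vector_mult[OF assms(1)] by (metis injD matrix_vector_mult_0_right)
  hence "(G *v x) \<bullet> (A *v (G *v x)) > 0" using assms(2) by (simp add: sym_posdef_def)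
  also have "(G *v x) \<bullet> (A *v (G *v x)) = x \<bullet> ((transpose G ** A ** G) *v x)"
    by (metis dot_lmul_matrix inner_commute matrix_vector_mul_assoc transpose_matrix_vector)
  finally show "x \<bullet> ((transpose G ** A ** G) *v x) > 0" .
qed

lemma congruence_matrix_inv_cancel:
  fixes A T :: "real^'n^'n"
  assumes "invertible T"
  shows "transpose (matrix_inv T) ** (transpose T ** A ** T) ** matrix_inv T = A"
proof -
  have "transpose (matrix_inv T) ** (transpose T ** A ** T) ** matrix_inv T
      = (transpose (matrix_inv T) ** transpose T) ** A ** (T ** matrix_inv T)"
    by (simp add: matrix_mul_assoc)
  thus ?thesis using transpose_matrix_inv_left[OF assms] matrix_inv_right[OF assms] by simp
qed

lemma sym_posdef_simultaneous_diagonalization: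
  fixes C0 C1 :: "real^'n^'n"
  assumes "sym_posdef C0" and "sym_posdef C1"
  obtains T :: "real^'n^'n" and lam where "invertible T" "transpose T ** C1 ** T = mat 1"
    "transpose T ** C0 ** T = diagm lam" "\<And>i. lam i > 0"
proof -
  obtain P d where P: "orthogonal_matrix P" and C1: "C1 = P ** diagm d ** transpose P"
    and d: "\<And>i. d i > 0"
    using sym_posdef_orthogonal_diagonalization[OF assms(2)] by blast
  define W where "W = P ** diagm (\<lambda>i. 1 / sqrt (d i))"
  have "W ** (diagm (\<lambda>i. sqrt (d i)) ** transpose P)
      = P ** diagm (\<lambda>i. 1 / sqrt (d i) * sqrt (d i)) ** transpose P"
    by (simp add: W_def matrix_mul_assoc matrix_mul_diagm_diagm)
  also have "\<dots> = mat 1"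
    using d P by (simp add: diagm_one orthogonal_matrix_def less_imp_neq[THEN not_sym])
  finally have W: "invertible W" using invertible_right_inverse by blast
  have "transpose W ** C1 ** W = diagm (\<lambda>i. 1 / sqrt (d i) * d i * (1 / sqrt (d i)))"
    using P by (simp add: W_def C1 matrix_transpose_mul transpose_diagm matrix_mul_assoc
        orthogonal_matrix_def matrix_mul_right_inverse_cancel matrix_mul_diagm_diagm diagm_mult)
  also have "\<dots> = mat 1"
    using d by (simp add: diagm_one[symmetric] abs_of_pos less_imp_neq[THEN not_sym])
  finally have W_C1: "transpose W ** C1 ** W = mat 1" .
  obtain Q lam where Q: "orthogonal_matrix Q"
    and N: "transpose W ** C0 ** W = Q ** diagm lam ** transpose Q" and lam: "\<And>i. lam i > 0"
    using sym_posdef_orthogonal_diagonalization[OF sym_posdef_congruence[OF W assms(1)]] by blast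
  have congr: "transpose (W ** Q) ** C ** (W ** Q) = transpose Q ** (transpose W ** C ** W) ** Q"
    for C :: "real^'n^'n"
    by (simp add: matrix_transpose_mul matrix_mul_assoc)
  show thesis
  proof (rule that)
    show "invertible (W ** Q)" using W orthogonal_matrix_invertible[OF Q] by (rule invertible_mult)
    show "transpose (W ** Q) ** C1 ** (W ** Q) = mat 1"
      using Q unfolding congr W_C1 by (simp add: orthogonal_matrix_def)
    show "transpose (W ** Q) ** C0 ** (W ** Q) = diagm lam"
      using Q unfolding congr N
      by (simp add: orthogonal_matrix_def matrix_mul_assoc matrix_mul_right_inverse_cancel)
  qed (fact lam)
qed

lemma det_scaleR: "det (c *\<^sub>R (A :: real^'n^'n)) = c ^ CARD('n) * det A"
proof -
  have "c *\<^sub>R A = (\<chi> i. c *s A $ i)" by (simp add: vec_eq_iff)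
  thus ?thesis using det_rows_mul[of "\<lambda>_. c" "\<lambda>i. A $ i"] by simp
qed

lemma cube_powr_neg_third:
  fixes p :: real
  assumes "p > 0"
  shows "(p powr (-1/3)) ^ 3 * p = 1"
proof -
  have "(p powr (-1/3)) ^ 3 = p powr (-1)" using assms by (simp add: powr_power)
  thus ?thesis using assms by (simp add: powr_minus_divide)
qed

lemma unimod_scaleR:
  fixes A :: mat3
  assumes "c > 0" and "det A > 0"
  shows "unimod (c *\<^sub>R A) = unimod A"
proof -
  have "(c ^ 3) powr (-1/3) = (c powr 3) powr (-1/3)"
    using assms(1) by (simp add: powr_numeral)
  also have "\<dots> = 1 / c"
    using assms(1) unfolding powr_powr by (simp add: powr_minus_divide)
  finally have "(c ^ 3) powr (-1/3) = 1 / c" .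
  hence "(c ^ 3 * det A) powr (-1/3) * c = det A powr (-1/3)"
    using assms by (simp add: powr_mult)
  thus ?thesis by (simp add: unimod_def det_scaleR)
qed

lemma unimod_congruence:
  fixes A G :: mat3
  assumes "det G = 1"
  shows "unimod (transpose G ** A ** G) = transpose G ** unimod A ** G"
proof -
  have "det (transpose G ** A ** G) = det A" using assms by (simp add: det_mul)
  thus ?thesis unfolding unimod_def by (simp only: scalar_matrix_assoc matrix_scalar_ac)
qed

lemma unimod_transpose: "unimod (transpose A) = transpose (unimod A)"
  by (simp add: unimod_def transpose_scalar)

lemma unimod_diag_similar:
  fixes P :: mat3
  assumes "invertible P"
  shows "unimod (P ** diagm d ** matrix_inv P)
    = P ** diagm (\<lambda>i. prod d UNIV powr (-1/3) * d i) ** matrix_inv P"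
  unfolding unimod_def det_diag_similar[OF assms] scaleR_diag_similar ..

section \<open>The shear\<close>

definition shear :: "mat3 \<Rightarrow> mat3 \<Rightarrow> mat3" where
  "shear C0 C1 = psqrt (unimod (matrix_inv C1 ** C0))"

lemma est_shear: "est C0 C1 Ci = transpose (matrix_inv (shear C0 C1)) ** Ci ** matrix_inv (shear C0 C1)"
  by (simp add: est_def shear_def Let_def)

locale simultaneous_diagonalization =
  fixes C0 C1 T :: mat3 and lam :: "3 \<Rightarrow> real"
  assumes invertible: "invertible T"
    and congruence_C1: "transpose T ** C1 ** T = mat 1"
    and congruence_C0: "transpose T ** C0 ** T = diagm lam"
    and lam_pos: "lam i > 0"
begin

definition mu :: "3 \<Rightarrow> real" where
  "mu i = prod lam UNIV powr (-1/3) * lam i"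

lemma prod_lam_pos: "prod lam UNIV > 0"
  using lam_pos by (simp add: prod_pos)

lemma mu_pos: "mu i > 0"
proof -
  have "prod lam UNIV powr (-1/3) > 0" using prod_lam_pos by (metis powr_gt_zero less_irrefl)
  thus ?thesis using lam_pos[of i] by (simp add: mu_def)
qed

lemma prod_mu: "prod mu UNIV = 1"
  using cube_powr_neg_third[OF prod_lam_pos] by (simp add: mu_def prod.distrib)

lemma C1_eq: "C1 = transpose (matrix_inv T) ** matrix_inv T"
  using congruence_matrix_inv_cancel[OF invertible, of C1] by (simp add: congruence_C1)

lemma C0_eq: "C0 = transpose (matrix_inv T) ** diagm lam ** matrix_inv T"
  using congruence_matrix_inv_cancel[OF invertible, of C0] by (simp add: congruence_C0 matrix_mul_assoc)

lemma matrix_inv_C1: "matrix_inv C1 = T ** transpose T"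
proof (rule matrix_inv_unique)
  have "C1 ** (T ** transpose T) = transpose (matrix_inv T) ** (matrix_inv T ** T) ** transpose T"
    by (simp add: C1_eq matrix_mul_assoc)
  thus "C1 ** (T ** transpose T) = mat 1"
    using matrix_inv_left[OF invertible] transpose_matrix_inv_left[OF invertible] transpose_matrix_inv_right[OF invertible] by simp
qed

lemma matrix_inv_C0: "matrix_inv C0 = T ** diagm (\<lambda>i. 1 / lam i) ** transpose T"
proof (rule matrix_inv_unique)
  have "C0 ** (T ** diagm (\<lambda>i. 1 / lam i) ** transpose T)
      = transpose (matrix_inv T) ** (diagm lam ** diagm (\<lambda>i. 1 / lam i)) ** transpose T"
    using matrix_inv_left[OF invertible]
    by (simp add: C0_eq matrix_mul_assoc matrix_mul_right_inverse_cancel)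
  thus "C0 ** (T ** diagm (\<lambda>i. 1 / lam i) ** transpose T) = mat 1"
    using lam_pos transpose_matrix_inv_left[OF invertible] transpose_matrix_inv_right[OF invertible]
    by (simp add: diagm_mult diagm_one less_imp_neq[THEN not_sym])
qed

lemma quotient_eq: "matrix_inv C1 ** C0 = T ** diagm lam ** matrix_inv T"
  using transpose_matrix_inv_left[OF invertible] transpose_matrix_inv_right[OF invertible]
  by (simp add: matrix_inv_C1 C0_eq matrix_mul_assoc matrix_mul_right_inverse_cancel)

lemma reverse_quotient_eq: "matrix_inv C0 ** C1 = T ** diagm (\<lambda>i. 1 / lam i) ** matrix_inv T"
  using transpose_matrix_inv_left[OF invertible] transpose_matrix_inv_right[OF invertible]
  by (simp add: matrix_inv_C0 C1_eq matrix_mul_assoc matrix_mul_right_inverse_cancel)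

lemma det_quotient: "det (matrix_inv C1 ** C0) = prod lam UNIV"
  by (simp add: quotient_eq det_diag_similar[OF invertible])

lemma unimod_quotient_eq: "unimod (matrix_inv C1 ** C0) = T ** diagm mu ** matrix_inv T"
  unfolding quotient_eq unimod_diag_similar[OF invertible] mu_def ..

lemma shear_eq: "shear C0 C1 = T ** diagm (\<lambda>i. sqrt (mu i)) ** matrix_inv T"
  unfolding shear_def unimod_quotient_eq by (rule psqrt_diag_similar[where d = mu, OF invertible mu_pos])

lemma matrix_inv_shear: "matrix_inv (shear C0 C1) = T ** diagm (\<lambda>i. 1 / sqrt (mu i)) ** matrix_inv T"
  unfolding shear_eq using invertible mu_pos
  by (simp add: matrix_inv_diag_similar less_imp_neq[THEN not_sym])

lemma invertible_shear: "invertible (shear C0 C1)"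
  unfolding shear_eq using invertible mu_pos
  by (simp add: invertible_diag_similar less_imp_neq[THEN not_sym])

lemma det_shear: "det (shear C0 C1) = 1"
proof -
  have "prod (\<lambda>i. sqrt (mu i)) UNIV ^ 2 = prod mu UNIV"
    using mu_pos by (simp add: prod_power_distrib less_imp_le)
  moreover have "prod (\<lambda>i. sqrt (mu i)) UNIV > 0"
    using mu_pos by (simp add: prod_pos)
  ultimately have "prod (\<lambda>i. sqrt (mu i)) UNIV = 1"
    using prod_mu by (simp add: power2_eq_1_iff)
  thus ?thesis by (simp add: shear_eq det_diag_similar[OF invertible])
qed

lemma det_matrix_inv_shear: "det (matrix_inv (shear C0 C1)) = 1"
  by (simp add: det_matrix_inv[OF invertible_shear] det_shear)

lemma det_C1_pos: "det C1 > 0"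
proof -
  have "det (matrix_inv T) \<noteq> 0"
    using invertible_matrix_inv[OF invertible] by (simp add: invertible_det_nz)
  thus ?thesis unfolding C1_eq det_mul det_transpose using not_real_square_gt_zero by blast
qed

text \<open>In the basis \<open>T\<close> the congruence divides each \<open>\<lambda>\<^sub>i\<close> twice by \<open>\<surd>\<mu>\<^sub>i\<close>, which
  leaves the constant \<open>(\<Prod>\<^sub>i \<lambda>\<^sub>i)\<^sup>1\<^sup>/\<^sup>3\<close>.\<close>
lemma shear_congruence_C0:
  "transpose (matrix_inv (shear C0 C1)) ** C0 ** matrix_inv (shear C0 C1)
    = prod lam UNIV powr (1/3) *\<^sub>R C1"
proof -
  define s where "s i = 1 / sqrt (mu i)" for i
  have "transpose (matrix_inv (shear C0 C1)) ** C0 ** matrix_inv (shear C0 C1)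
      = transpose (matrix_inv T) ** diagm s ** (transpose T ** C0 ** T) ** diagm s ** matrix_inv T"
    unfolding matrix_inv_shear s_def[symmetric]
    by (simp add: matrix_transpose_mul transpose_diagm matrix_mul_assoc)
  also have "\<dots> = transpose (matrix_inv T) ** diagm (\<lambda>_. prod lam UNIV powr (1/3)) ** matrix_inv T"
  proof -
    have "s i * lam i * s i = prod lam UNIV powr (1/3)" for i
      using lam_pos[of i] mu_pos[of i] prod_lam_pos
      by (simp add: s_def mu_def powr_minus_divide)
    thus ?thesis by (simp add: congruence_C0 matrix_mul_diagm_diagm)
  qed
  also have "\<dots> = prod lam UNIV powr (1/3) *\<^sub>R C1"
    using scaleR_diag_similar[of "prod lam UNIV powr (1/3)" "transpose (matrix_inv T)" "\<lambda>_. 1" "matrix_inv T"]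
    by (simp add: C1_eq diagm_one)
  finally show ?thesis .
qed

lemma shear_congruence_unimod:
  "transpose (matrix_inv (shear C0 C1)) ** unimod C0 ** matrix_inv (shear C0 C1) = unimod C1"
proof -
  have "transpose (matrix_inv (shear C0 C1)) ** unimod C0 ** matrix_inv (shear C0 C1)
      = unimod (prod lam UNIV powr (1/3) *\<^sub>R C1)"
    by (simp add: unimod_congruence[OF det_matrix_inv_shear, symmetric] shear_congruence_C0)
  also have "\<dots> = unimod C1"
    using prod_lam_pos det_C1_pos by (intro unimod_scaleR) (simp_all add: less_imp_neq[THEN not_sym])
  finally show ?thesis .
qed

lemma quotient_det_pos: "det (matrix_inv C1 ** C0) > 0"
  using det_quotient prod_lam_pos by simp

lemma unimod_quotient_diagonalizable: "real_diagonalizable (unimod (matrix_inv C1 ** C0))"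
  unfolding unimod_quotient_eq by (rule real_diagonalizable_diag_similar[OF invertible])

lemma unimod_quotient_eigenvalue_pos: "is_eigenvalue (unimod (matrix_inv C1 ** C0)) l \<Longrightarrow> l > 0"
  unfolding unimod_quotient_eq by (elim eigenvalue_diag_similar[OF invertible]) (simp add: mu_pos)

lemma shear_square: "shear C0 C1 ** shear C0 C1 = unimod (matrix_inv C1 ** C0)"
  unfolding shear_eq unimod_quotient_eq by (rule diag_similar_sqrt(1)[where d = mu, OF invertible mu_pos])

lemma shear_eigenvalue_pos: "is_eigenvalue (shear C0 C1) l \<Longrightarrow> l > 0"
  unfolding shear_eq by (rule diag_similar_sqrt(2)[where d = mu, OF invertible mu_pos])

lemma shear_unique:
  assumes "S ** S = unimod (matrix_inv C1 ** C0)" and "\<And>l. is_eigenvalue S l \<Longrightarrow> l > 0"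
  shows "S = shear C0 C1"
  using assms unfolding shear_eq unimod_quotient_eq
  by (rule diag_similar_sqrt_unique[where d = mu, OF invertible mu_pos])

lemma unimod_reverse_quotient_eq:
  "unimod (matrix_inv C0 ** C1) = T ** diagm (\<lambda>i. 1 / mu i) ** matrix_inv T"
proof -
  have "prod (\<lambda>i. 1 / lam i) UNIV powr (-1/3) * (1 / lam i) = 1 / mu i" for i
    using prod_lam_pos lam_pos[of i]
    by (simp add: mu_def prod_dividef powr_divide powr_minus_divide)
  thus ?thesis by (simp add: reverse_quotient_eq unimod_diag_similar[OF invertible])
qed

lemma psqrt_unimod_reverse_quotient:
  "psqrt (unimod (matrix_inv C0 ** C1)) = matrix_inv (shear C0 C1)"
proof -
  have "psqrt (unimod (matrix_inv C0 ** C1)) = T ** diagm (\<lambda>i. sqrt (1 / mu i)) ** matrix_inv T"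
    unfolding unimod_reverse_quotient_eq using mu_pos
    by (intro psqrt_diag_similar[where d = "\<lambda>i. 1 / mu i", OF invertible]) simp
  thus ?thesis by (simp add: matrix_inv_shear real_sqrt_divide)
qed

lemma psqrt_unimod_reverse_quotient_transposed:
  "psqrt (unimod (C1 ** matrix_inv C0)) = transpose (matrix_inv (shear C0 C1))"
proof -
  define P where "P = transpose (matrix_inv T)"
  have P: "invertible P" unfolding P_def
    using transpose_invertible[OF invertible_matrix_inv[OF invertible]] .
  have "C1 ** matrix_inv C0 = transpose (matrix_inv C0 ** C1)"
    by (simp add: C1_eq matrix_inv_C0 matrix_transpose_mul transpose_diagm matrix_mul_assoc)
  hence "unimod (C1 ** matrix_inv C0) = P ** diagm (\<lambda>i. 1 / mu i) ** matrix_inv P"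
    by (simp add: unimod_transpose unimod_reverse_quotient_eq transpose_diag_similar[OF invertible] P_def)
  hence "psqrt (unimod (C1 ** matrix_inv C0)) = P ** diagm (\<lambda>i. sqrt (1 / mu i)) ** matrix_inv P"
    using mu_pos by (simp add: psqrt_diag_similar[where d = "\<lambda>i. 1 / mu i", OF P])
  thus ?thesis
    by (simp add: matrix_inv_shear transpose_diag_similar[OF invertible] P_def real_sqrt_divide)
qed

lemma sym_posdef_est: "sym_posdef Ci \<Longrightarrow> sym_posdef (est C0 C1 Ci)"
  unfolding est_shear using invertible_matrix_inv[OF invertible_shear] by (rule sym_posdef_congruence)

lemma det_est: "det (est C0 C1 Ci) = det Ci"
  by (simp add: est_shear det_mul det_matrix_inv_shear)

lemma est_psqrt_reverse_quotients:
  "est C0 C1 Ci = psqrt (unimod (C1 ** matrix_inv C0)) ** Ci ** psqrt (unimod (matrix_inv C0 ** C1))"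
  by (simp add: est_shear psqrt_unimod_reverse_quotient psqrt_unimod_reverse_quotient_transposed)

lemma congruence_transform:
  fixes F0 :: mat3
  assumes "invertible F0"
  shows "simultaneous_diagonalization
    (transpose (matrix_inv F0) ** C0 ** matrix_inv F0) (transpose (matrix_inv F0) ** C1 ** matrix_inv F0)
    (F0 ** T) lam"
proof
  have congr: "transpose (F0 ** T) ** (transpose (matrix_inv F0) ** C ** matrix_inv F0) ** (F0 ** T)
      = transpose T ** C ** T" for C :: mat3
  proof -
    have "transpose (F0 ** T) ** (transpose (matrix_inv F0) ** C ** matrix_inv F0) ** (F0 ** T)
        = transpose T ** transpose (matrix_inv F0 ** F0) ** C ** (matrix_inv F0 ** F0) ** T"
      by (simp add: matrix_transpose_mul matrix_mul_assoc)
    thus ?thesis using matrix_inv_left[OF assms] by simp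
  qed
  show "invertible (F0 ** T)" using assms invertible by (rule invertible_mult)
  show "transpose (F0 ** T) ** (transpose (matrix_inv F0) ** C1 ** matrix_inv F0) ** (F0 ** T) = mat 1"
    unfolding congr by (rule congruence_C1)
  show "transpose (F0 ** T) ** (transpose (matrix_inv F0) ** C0 ** matrix_inv F0) ** (F0 ** T) = diagm lam"
    unfolding congr by (rule congruence_C0)
qed (rule lam_pos)

lemma matrix_inv_shear_congruence:
  fixes F0 :: mat3
  assumes "invertible F0"
  shows "matrix_inv (shear (transpose (matrix_inv F0) ** C0 ** matrix_inv F0)
      (transpose (matrix_inv F0) ** C1 ** matrix_inv F0))
    = F0 ** matrix_inv (shear C0 C1) ** matrix_inv F0"
proof -
  interpret transformed: simultaneous_diagonalization
    "transpose (matrix_inv F0) ** C0 ** matrix_inv F0" "transpose (matrix_inv F0) ** C1 ** matrix_inv F0"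
    "F0 ** T" lam
    using assms by (rule congruence_transform)
  show ?thesis
    using transformed.matrix_inv_shear
    by (simp add: matrix_inv_shear matrix_inv_mult[OF assms invertible] matrix_mul_assoc)
qed

lemma est_congruence:
  fixes F0 :: mat3
  assumes "invertible F0"
  shows "est (transpose (matrix_inv F0) ** C0 ** matrix_inv F0)
      (transpose (matrix_inv F0) ** C1 ** matrix_inv F0) (transpose (matrix_inv F0) ** Ci ** matrix_inv F0)
    = transpose (matrix_inv F0) ** est C0 C1 Ci ** matrix_inv F0"
  using transpose_matrix_inv_right[OF assms] matrix_inv_left[OF assms]
  by (simp add: est_shear matrix_inv_shear_congruence[OF assms] matrix_transpose_mul
      matrix_mul_assoc matrix_mul_right_inverse_cancel)

end

theorem mainTheorem7:
  fixes C0 C1 Ci :: mat3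
  assumes "sym_posdef C0" and "sym_posdef C1" and "sym_posdef Ci"
  defines "M \<equiv> unimod (matrix_inv C1 ** C0)"
  defines "F \<equiv> psqrt M"
  defines "E \<equiv> transpose (matrix_inv F) ** Ci ** matrix_inv F"
  shows "det (matrix_inv C1 ** C0) > 0
    \<and> real_diagonalizable M \<and> (\<forall>l. is_eigenvalue M l \<longrightarrow> l > 0)
    \<and> F ** F = M \<and> (\<forall>l. is_eigenvalue F l \<longrightarrow> l > 0)
    \<and> (\<forall>S. S ** S = M \<and> (\<forall>l. is_eigenvalue S l \<longrightarrow> l > 0) \<longrightarrow> S = F)
    \<and> E = est C0 C1 Ci
    \<and> transpose (matrix_inv F) ** unimod C0 ** matrix_inv F = unimod C1
    \<and> det F = 1
    \<and> sym_posdef E \<and> det E = det Ci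
    \<and> E = psqrt (unimod (C1 ** matrix_inv C0)) ** Ci ** psqrt (unimod (matrix_inv C0 ** C1))
    \<and> (\<forall>F0 :: mat3. det F0 = 1 \<longrightarrow>
         est (transpose (matrix_inv F0) ** C0 ** matrix_inv F0)
             (transpose (matrix_inv F0) ** C1 ** matrix_inv F0)
             (transpose (matrix_inv F0) ** Ci ** matrix_inv F0)
         = transpose (matrix_inv F0) ** E ** matrix_inv F0)"
proof -
  obtain T :: mat3 and lam where "invertible T" "transpose T ** C1 ** T = mat 1"
    "transpose T ** C0 ** T = diagm lam" "\<And>i. lam i > 0"
    using sym_posdef_simultaneous_diagonalization[OF assms(1,2)] by blast
  then interpret simultaneous_diagonalization C0 C1 T lam
    by (intro simultaneous_diagonalization.intro)
  have F: "F = shear C0 C1" by (simp add: F_def M_def shear_def)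
  have E: "E = est C0 C1 Ci" by (simp add: E_def F est_shear)
  show ?thesis
    unfolding M_def F E
  proof (intro conjI allI impI)
    show "det (matrix_inv C1 ** C0) > 0" by (rule quotient_det_pos)
    show "real_diagonalizable (unimod (matrix_inv C1 ** C0))" by (rule unimod_quotient_diagonalizable)
    show "is_eigenvalue (unimod (matrix_inv C1 ** C0)) l \<Longrightarrow> l > 0" for l
      by (rule unimod_quotient_eigenvalue_pos)
    show "shear C0 C1 ** shear C0 C1 = unimod (matrix_inv C1 ** C0)" by (rule shear_square)
    show "is_eigenvalue (shear C0 C1) l \<Longrightarrow> l > 0" for l by (rule shear_eigenvalue_pos)
    show "S ** S = unimod (matrix_inv C1 ** C0) \<and> (\<forall>l. is_eigenvalue S l \<longrightarrow> l > 0)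
      \<Longrightarrow> S = shear C0 C1" for S
      using shear_unique by blast
    show "est C0 C1 Ci = est C0 C1 Ci" ..
    show "transpose (matrix_inv (shear C0 C1)) ** unimod C0 ** matrix_inv (shear C0 C1) = unimod C1"
      by (rule shear_congruence_unimod)
    show "det (shear C0 C1) = 1" by (rule det_shear)
    show "sym_posdef (est C0 C1 Ci)" using assms(3) by (rule sym_posdef_est)
    show "det (est C0 C1 Ci) = det Ci" by (rule det_est)
    show "est C0 C1 Ci = psqrt (unimod (C1 ** matrix_inv C0)) ** Ci ** psqrt (unimod (matrix_inv C0 ** C1))"
      by (rule est_psqrt_reverse_quotients)
    show "est (transpose (matrix_inv F0) ** C0 ** matrix_inv F0)
        (transpose (matrix_inv F0) ** C1 ** matrix_inv F0) (transpose (matrix_inv F0) ** Ci ** matrix_inv F0)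
      = transpose (matrix_inv F0) ** est C0 C1 Ci ** matrix_inv F0" if "det F0 = 1" for F0 :: mat3
      using that by (simp add: est_congruence invertible_det_nz)
  qed
qed

end
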